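(* Consider the $\mathcal N$-system (setting in the context) with $\boldsymbol\lambda\to(\mu_1,\mu_2)$, operating under a scheduling policy that achieves state space collapse. Let $\Phi=\{\boldsymbol\phi\in\mathbb C^2:\mathrm{Re}(\phi_1)\le0,\mathrm{Re}(\phi_1+\phi_2)\le0\}$ and $\boldsymbol\phi\in\Phi$. Then, with expectations under the stationary distribution: 1. $\lim_{\epsilon\to0}|\mathbb E[e^{\epsilon(\phi_1q_1+\phi_2q_2)}]|<\infty$, $\lim_{\epsilon\to0}|\mathbb E[e^{\epsilon(\phi_1+\phi_2)q_2}\mid q_1\le q_2]|<\infty$ and $\lim_{\epsilon\to0}|\mathbb E[e^{\epsilon\phi_1q_1}\mid q_2=0]|<\infty$; 2. $\lim_{\epsilon\to0}\mathbb E[e^{\epsilon(\phi_1q_1+\phi_2q_2)}]=\lim_{\epsilon\to0}\mathbb E\big[e^{\epsilon(\phi_1(q_1-q_2)\mathbf 1_{\{q_1\ge q_2\}}+(\phi_1+\phi_2)q_2)}\big]$.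
   Context: $\mathcal N$-system: continuous time, queues $q_1,q_2$ with independent Poisson arrivals of rates $\lambda_1,\lambda_2$; server $S_1$ (exponential rate $\mu_1$) serves either class, one queue at a time; server $S_2$ (rate $\mu_2$) serves only class 2; configurations ($S_1\to q_1$, $S_2\to q_2$) or (both $\to q_2$). The policy makes $(q_1(t),q_2(t))$ an irreducible aperiodic positive recurrent Markov chain; $(q_1,q_2)$ is stationary. $\lambda_1=(1-\epsilon)\mu_1$, $\lambda_1+\lambda_2=(1-\gamma\epsilon)(\mu_1+\mu_2)$, fixed $\gamma>0$, $\epsilon\to0$. With $\mathcal K_3=\{\mathbf x\in\mathbb R^2_+:x_2\le x_1\}$ and $\mathbf q_{\perp\mathcal K_3}=\frac{q_2-q_1}{2}(-1,1)\mathbf 1_{\{q_2>q_1\}}$, state space collapse means: for every $\theta\ge0$ there are $\epsilon(\theta)>0$ and $C^\star<\infty$ with $\mathbb E[e^{\epsilon\theta\|\mathbf q_{\perp\mathcal K_3}\|}]<C^\star$ for $0<\epsilon\le\epsilon(\theta)$, and for each nonnegative integer $r$, $\mathbb E\|\mathbf q_{\perp\mathcal K_3}\|^r\le C_r$ independent of $\epsilon$. *)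

theory Defs
  imports "HOL-Probability.Probability"
begin

definition lam1 :: "real \<Rightarrow> real \<Rightarrow> real" where
  "lam1 mu1 eps = (1 - eps) * mu1"

definition lam2 :: "real \<Rightarrow> real \<Rightarrow> real \<Rightarrow> real \<Rightarrow> real" where
  "lam2 mu1 mu2 gam eps = (1 - gam * eps) * (mu1 + mu2) - (1 - eps) * mu1"

text \<open>The (possibly randomised) Markovian policy is given by p x \<in> [0,1], the probability
  that in state x the configuration (S1 to q1, S2 to q2) is used; with probability
  1 - p x both servers serve q2.\<close>
definition Nrate :: "real \<Rightarrow> real \<Rightarrow> real \<Rightarrow> real \<Rightarrow> (nat \<times> nat \<Rightarrow> real)
    \<Rightarrow> nat \<times> nat \<Rightarrow> nat \<times> nat \<Rightarrow> real" where
  "Nrate l1 l2 m1 m2 p x y = (case x of (a, b) \<Rightarrow>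
      (if y = (a + 1, b) then l1 else 0)
    + (if y = (a, b + 1) then l2 else 0)
    + (if 0 < a \<and> y = (a - 1, b) then p x * m1 else 0)
    + (if 0 < b \<and> y = (a, b - 1) then m2 + (1 - p x) * m1 else 0))"

definition stationary_dist :: "(nat \<times> nat \<Rightarrow> nat \<times> nat \<Rightarrow> real) \<Rightarrow> (nat \<times> nat) pmf \<Rightarrow> bool" where
  "stationary_dist R P \<longleftrightarrow>
     (\<forall>y. pmf P y * (\<Sum>\<^sub>\<infinity>z. R y z) = (\<Sum>\<^sub>\<infinity>x. pmf P x * R x y))"

definition irreducible_chain :: "(nat \<times> nat \<Rightarrow> nat \<times> nat \<Rightarrow> real) \<Rightarrow> bool" where
  "irreducible_chain R \<longleftrightarrow> (\<forall>x y. (\<lambda>u v. 0 < R u v)\<^sup>*\<^sup>* x y)"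

text \<open>Norm of the projection of q onto the polar cone of K3: ((q2-q1)/2)(-1,1) 1{q2>q1}.\<close>
definition qperp_norm :: "nat \<times> nat \<Rightarrow> real" where
  "qperp_norm q = max 0 (real (snd q) - real (fst q)) / sqrt 2"

end

theory Submission
  imports Defs
begin

(* The exponent of e^{eps (phi1 q1 + phi2 q2)} has real part at most eps (Re phi2)^+ (q2 - q1)^+,
   a multiple of eps ||q_perp||, so the exponential moments provided by state space collapse bound
   the transform.  The collapsed integrand is the transform evaluated at (max q1 q2, q2); it differs
   from the original only on {q2 > q1}, by a factor e^{-eps phi1 (q2 - q1)}.  Since
   |e^w - 1| <= |w| e^|w| and by AM-GM, the difference is at most
   eps |phi1| (||q_perp||^2 + e^{2 sqrt 2 eps |phi1| ||q_perp||}), whose expectation is O(eps) again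
   by state space collapse.  The conditional transforms are bounded by 1 because their exponents
   have nonpositive real part. *)

lemma norm_exp_sub_one_le: "norm (exp w - 1) \<le> norm w * exp (norm w)" for w :: complex
proof -
  have "norm (exp w - exp 0) \<le> exp (norm w) * norm (w - 0)"
  proof (rule field_differentiable_bound[where S = "cball 0 (norm w)" and f' = exp])
    fix z :: complex assume "z \<in> cball 0 (norm w)"
    then have "Re z \<le> norm w" using complex_Re_le_cmod[of z] by simp
    then show "norm (exp z) \<le> exp (norm w)" by simp
  qed (auto intro: DERIV_exp has_field_derivative_at_within)
  then show ?thesis by (simp add: mult.commute)
qed

lemma norm_exp_add_sub_exp_le:
  fixes u w :: complex
  assumes "Re u \<le> 0"
  shows "norm (exp (u + w) - exp u) \<le> norm w * exp (norm w)"
proof -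
  have "exp (u + w) - exp u = exp u * (exp w - 1)"
    by (simp add: exp_add algebra_simps)
  then have "norm (exp (u + w) - exp u) = norm (exp u) * norm (exp w - 1)"
    by (simp only: norm_mult)
  also have "\<dots> \<le> 1 * (norm w * exp (norm w))"
    using assms by (intro mult_mono norm_exp_sub_one_le) auto
  finally show ?thesis by simp
qed

lemma lincomb_le_pos_part_mult_pos_part:
  fixes c1 c2 x1 x2 :: real
  assumes "c1 \<le> 0" "c1 + c2 \<le> 0" "0 \<le> x1" "0 \<le> x2"
  shows "c1 * x1 + c2 * x2 \<le> max 0 c2 * max 0 (x2 - x1)"
proof (cases "x1 \<le> x2")
  case True
  have "c1 * x1 + c2 * x2 = (c1 + c2) * x1 + c2 * (x2 - x1)" by (simp add: algebra_simps)
  also have "\<dots> \<le> 0 + max 0 c2 * (x2 - x1)"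
    using assms True by (intro add_mono mult_nonpos_nonneg mult_right_mono) auto
  finally show ?thesis using True by simp
next
  case False
  have "c1 * x1 + c2 * x2 = c1 * (x1 - x2) + (c1 + c2) * x2" by (simp add: algebra_simps)
  also have "\<dots> \<le> 0"
    using assms False by (intro add_nonpos_nonpos[OF mult_nonpos_nonneg mult_nonpos_nonneg]) auto
  also have "\<dots> \<le> max 0 c2 * max 0 (x2 - x1)" by simp
  finally show ?thesis .
qed

lemma
  fixes f :: "'a \<Rightarrow> 'b::{banach, second_countable_topology}"
  assumes g: "integrable (measure_pmf M) g" and f_le_g: "\<And>q. norm (f q) \<le> g q"
  shows integrable_pmf_dominated: "integrable (measure_pmf M) f"
    and norm_expectation_le_dominating: "norm (measure_pmf.expectation M f) \<le> measure_pmf.expectation M g"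
proof -
  show f: "integrable (measure_pmf M) f"
    using g by (rule Bochner_Integration.integrable_bound)
      (auto intro!: AE_I2 intro: order_trans[OF f_le_g abs_ge_self])
  have "norm (measure_pmf.expectation M f) \<le> measure_pmf.expectation M (\<lambda>q. norm (f q))"
    by (rule integral_norm_bound)
  also have "\<dots> \<le> measure_pmf.expectation M g"
    using f g f_le_g by (intro integral_mono) auto
  finally show "norm (measure_pmf.expectation M f) \<le> measure_pmf.expectation M g" .
qed

lemma norm_expectation_diff_le:
  fixes f g :: "'a \<Rightarrow> 'b::{banach, second_countable_topology}"
  assumes f: "integrable (measure_pmf M) f" and h: "integrable (measure_pmf M) h"
    and diff_le_h: "\<And>q. norm (f q - g q) \<le> h q"
  shows "norm (measure_pmf.expectation M f - measure_pmf.expectation M g) \<le> measure_pmf.expectation M h"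
proof -
  have diff: "integrable (measure_pmf M) (\<lambda>q. f q - g q)"
    using h diff_le_h by (rule integrable_pmf_dominated)
  have "integrable (measure_pmf M) (\<lambda>q. f q - (f q - g q))"
    using f diff by (rule Bochner_Integration.integrable_diff)
  then have "integrable (measure_pmf M) g" by simp
  then have "measure_pmf.expectation M f - measure_pmf.expectation M g
      = measure_pmf.expectation M (\<lambda>q. f q - g q)"
    using f by (simp add: Bochner_Integration.integral_diff)
  also have "norm \<dots> \<le> measure_pmf.expectation M h"
    using h diff_le_h by (rule norm_expectation_le_dominating)
  finally show ?thesis .
qed

text \<open>A null conditioning event gives the junk value 0 (division by zero), so no positivity of its
  probability is required.\<close>

lemma norm_cond_expectation_exp_le_1:
  fixes M :: "'a pmf" and z :: "'a \<Rightarrow> complex"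
  assumes "\<And>q. P q \<Longrightarrow> Re (z q) \<le> 0"
  shows "norm (measure_pmf.expectation M (\<lambda>q. if P q then exp (z q) else 0)
    / of_real (measure_pmf.prob M {q. P q})) \<le> 1"
proof -
  have "norm (measure_pmf.expectation M (\<lambda>q. if P q then exp (z q) else 0))
      \<le> measure_pmf.expectation M (indicator {q. P q})"
    using assms by (intro norm_expectation_le_dominating)
      (auto simp: indicator_def measure_pmf.emeasure_finite less_top[symmetric] intro!: integrable_real_indicator)
  then have "norm (measure_pmf.expectation M (\<lambda>q. if P q then exp (z q) else 0))
      \<le> measure_pmf.prob M {q. P q}"
    by simp
  then show ?thesis
    by (auto simp: norm_divide divide_le_eq_1 less_le)
qed

lemma eventually_norm_cond_expectation_exp_bounded:
  fixes M :: "real \<Rightarrow> 'a pmf" and z :: "real \<Rightarrow> 'a \<Rightarrow> complex"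
  assumes "\<And>eps q. 0 < eps \<Longrightarrow> P q \<Longrightarrow> Re (z eps q) \<le> 0"
  shows "\<exists>C. \<forall>\<^sub>F eps in at_right 0.
    norm (measure_pmf.expectation (M eps) (\<lambda>q. if P q then exp (z eps q) else 0)
      / of_real (measure_pmf.prob (M eps) {q. P q})) \<le> C"
  using assms by (intro exI[of _ 1] eventually_mono[OF eventually_at_right_less] norm_cond_expectation_exp_le_1)

definition eventually_bounded_expectation :: "(real \<Rightarrow> 'a pmf) \<Rightarrow> (real \<Rightarrow> 'a \<Rightarrow> real) \<Rightarrow> bool" where
  "eventually_bounded_expectation M g \<longleftrightarrow> (\<exists>C. \<forall>\<^sub>F eps in at_right 0.
     integrable (measure_pmf (M eps)) (g eps) \<and> measure_pmf.expectation (M eps) (g eps) \<le> C)"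

lemma eventually_bounded_expectationI:
  assumes "0 < e"
    and "\<And>eps. 0 < eps \<Longrightarrow> eps < e \<Longrightarrow>
      integrable (measure_pmf (M eps)) (g eps) \<and> measure_pmf.expectation (M eps) (g eps) \<le> C"
  shows "eventually_bounded_expectation M g"
  unfolding eventually_bounded_expectation_def
  using assms by (intro exI[of _ C] eventually_at_rightI[of 0 e]) auto

lemma eventually_bounded_expectation_add:
  assumes "eventually_bounded_expectation M f" "eventually_bounded_expectation M g"
  shows "eventually_bounded_expectation M (\<lambda>eps q. f eps q + g eps q)"
proof -
  obtain Cf Cg where
    "\<forall>\<^sub>F eps in at_right 0.
      integrable (measure_pmf (M eps)) (f eps) \<and> measure_pmf.expectation (M eps) (f eps) \<le> Cf"
    "\<forall>\<^sub>F eps in at_right 0.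
      integrable (measure_pmf (M eps)) (g eps) \<and> measure_pmf.expectation (M eps) (g eps) \<le> Cg"
    using assms unfolding eventually_bounded_expectation_def by blast
  then show ?thesis
    unfolding eventually_bounded_expectation_def
    by (intro exI[of _ "Cf + Cg"]) (auto elim: eventually_elim2)
qed

lemma eventually_bounded_expectation_mult_left:
  assumes "eventually_bounded_expectation M f" "0 \<le> c"
  shows "eventually_bounded_expectation M (\<lambda>eps q. c * f eps q)"
proof -
  obtain C where
    "\<forall>\<^sub>F eps in at_right 0.
      integrable (measure_pmf (M eps)) (f eps) \<and> measure_pmf.expectation (M eps) (f eps) \<le> C"
    using assms unfolding eventually_bounded_expectation_def by blast
  then show ?thesis
    unfolding eventually_bounded_expectation_def
    using \<open>0 \<le> c\<close> by (intro exI[of _ "c * C"]) (auto elim!: eventually_mono intro: mult_left_mono)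
qed

lemma
  fixes f :: "real \<Rightarrow> 'a \<Rightarrow> 'b::{banach, second_countable_topology}"
  assumes g: "eventually_bounded_expectation M g"
    and f_le_g: "\<And>eps q. 0 < eps \<Longrightarrow> norm (f eps q) \<le> g eps q"
  shows eventually_integrable_dominated: "\<forall>\<^sub>F eps in at_right 0. integrable (measure_pmf (M eps)) (f eps)"
    and eventually_norm_expectation_bounded:
      "\<exists>C. \<forall>\<^sub>F eps in at_right 0. norm (measure_pmf.expectation (M eps) (f eps)) \<le> C"
proof -
  obtain C where C: "\<forall>\<^sub>F eps in at_right 0.
      integrable (measure_pmf (M eps)) (g eps) \<and> measure_pmf.expectation (M eps) (g eps) \<le> C"
    using g unfolding eventually_bounded_expectation_def by blast
  show "\<forall>\<^sub>F eps in at_right 0. integrable (measure_pmf (M eps)) (f eps)"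
    using C eventually_at_right_less
    by eventually_elim (auto intro: integrable_pmf_dominated f_le_g)
  have "\<forall>\<^sub>F eps in at_right 0. norm (measure_pmf.expectation (M eps) (f eps)) \<le> C"
    using C eventually_at_right_less
    by eventually_elim (auto intro: order_trans[OF norm_expectation_le_dominating] f_le_g)
  then show "\<exists>C. \<forall>\<^sub>F eps in at_right 0. norm (measure_pmf.expectation (M eps) (f eps)) \<le> C" ..
qed

lemma tendsto_expectation_diff_zero:
  fixes f g :: "real \<Rightarrow> 'a \<Rightarrow> 'b::{banach, second_countable_topology}"
  assumes f: "\<forall>\<^sub>F eps in at_right 0. integrable (measure_pmf (M eps)) (f eps)"
    and h: "eventually_bounded_expectation M h"
    and diff_le: "\<And>eps q. 0 < eps \<Longrightarrow> norm (f eps q - g eps q) \<le> eps * h eps q"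
  shows "((\<lambda>eps. measure_pmf.expectation (M eps) (f eps) - measure_pmf.expectation (M eps) (g eps)) \<longlongrightarrow> 0)
    (at_right 0)"
proof -
  obtain C where C: "\<forall>\<^sub>F eps in at_right 0.
      integrable (measure_pmf (M eps)) (h eps) \<and> measure_pmf.expectation (M eps) (h eps) \<le> C"
    using h unfolding eventually_bounded_expectation_def by blast
  have "\<forall>\<^sub>F eps in at_right 0.
      norm (measure_pmf.expectation (M eps) (f eps) - measure_pmf.expectation (M eps) (g eps)) \<le> eps * C"
    using f C eventually_at_right_less
  proof eventually_elim
    case (elim eps)
    then have "norm (measure_pmf.expectation (M eps) (f eps) - measure_pmf.expectation (M eps) (g eps))
        \<le> measure_pmf.expectation (M eps) (\<lambda>q. eps * h eps q)"
      by (intro norm_expectation_diff_le diff_le) auto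
    also have "\<dots> \<le> eps * C"
      using elim by (simp add: mult_left_mono)
    finally show ?case .
  qed
  moreover have "((\<lambda>eps. eps * C) \<longlongrightarrow> 0) (at_right 0)"
    by (rule tendsto_eq_intros) (auto intro: tendsto_ident_at)
  ultimately show ?thesis by (rule Lim_null_comparison)
qed

definition mgf_integrand :: "complex \<Rightarrow> complex \<Rightarrow> real \<Rightarrow> nat \<times> nat \<Rightarrow> complex" where
  "mgf_integrand phi1 phi2 eps q = exp (of_real eps * (phi1 * of_nat (fst q) + phi2 * of_nat (snd q)))"

definition collapsed_mgf_integrand :: "complex \<Rightarrow> complex \<Rightarrow> real \<Rightarrow> nat \<times> nat \<Rightarrow> complex" where
  "collapsed_mgf_integrand phi1 phi2 eps q = exp (of_real eps *
     (phi1 * (if snd q \<le> fst q then of_nat (fst q) - of_nat (snd q) else 0) + (phi1 + phi2) * of_nat (snd q)))"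

lemma norm_mgf_integrand_le:
  assumes "Re phi1 \<le> 0" "Re (phi1 + phi2) \<le> 0" "0 \<le> eps"
  shows "norm (mgf_integrand phi1 phi2 eps q) \<le> exp (eps * (sqrt 2 * max 0 (Re phi2)) * qperp_norm q)"
proof -
  have "Re phi1 * fst q + Re phi2 * snd q \<le> max 0 (Re phi2) * max 0 (real (snd q) - real (fst q))"
    using assms by (intro lincomb_le_pos_part_mult_pos_part) auto
  then have "eps * (Re phi1 * fst q + Re phi2 * snd q) \<le> eps * (sqrt 2 * max 0 (Re phi2)) * qperp_norm q"
    using assms(3) by (simp add: qperp_norm_def mult_left_mono)
  then show ?thesis by (simp add: mgf_integrand_def)
qed

lemma norm_mgf_integrand_sub_collapsed_le:
  assumes "Re phi1 \<le> 0" "Re (phi1 + phi2) \<le> 0" "0 \<le> eps"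
  shows "norm (mgf_integrand phi1 phi2 eps q - collapsed_mgf_integrand phi1 phi2 eps q)
    \<le> eps * (norm phi1 * (qperp_norm q ^ 2 + exp (eps * (2 * sqrt 2 * norm phi1) * qperp_norm q)))"
proof (cases "snd q \<le> fst q")
  case True
  then have "mgf_integrand phi1 phi2 eps q = collapsed_mgf_integrand phi1 phi2 eps q"
    by (simp add: mgf_integrand_def collapsed_mgf_integrand_def of_nat_diff algebra_simps)
  then show ?thesis using assms(3) by simp
next
  case False
  define d where "d = real (snd q) - real (fst q)"
  define c where "c = eps * norm phi1"
  define u where "u = of_real eps * (phi1 + phi2) * of_nat (snd q)"
  define w where "w = - (of_real eps * phi1 * of_real d)"
  have "0 < d" using False by (simp add: d_def)
  have qperp: "qperp_norm q = d / sqrt 2"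
    using \<open>0 < d\<close> by (simp add: qperp_norm_def d_def)
  have "Re u \<le> 0"
    using assms by (simp add: u_def mult_nonneg_nonpos mult_nonpos_nonneg)
  have "mgf_integrand phi1 phi2 eps q = exp (u + w)"
    by (simp add: mgf_integrand_def u_def w_def d_def algebra_simps)
  moreover have "collapsed_mgf_integrand phi1 phi2 eps q = exp u"
    using False by (simp add: collapsed_mgf_integrand_def u_def mult.assoc)
  ultimately have "norm (mgf_integrand phi1 phi2 eps q - collapsed_mgf_integrand phi1 phi2 eps q)
      \<le> norm w * exp (norm w)"
    using norm_exp_add_sub_exp_le[OF \<open>Re u \<le> 0\<close>] by simp
  also have "\<dots> = c * (d * exp (c * d))"
    using \<open>0 < d\<close> assms(3) by (simp add: w_def c_def norm_mult)
  also have "\<dots> \<le> c * (d\<^sup>2 / 2 + (exp (c * d))\<^sup>2 / 2)"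
    using sum_squares_bound[of d "exp (c * d)"] assms(3) by (intro mult_left_mono) (auto simp: c_def)
  also have "\<dots> \<le> eps * (norm phi1 * (qperp_norm q ^ 2 + exp (eps * (2 * sqrt 2 * norm phi1) * qperp_norm q)))"
    using assms(3) by (simp add: qperp c_def power_divide exp_double[symmetric] algebra_simps)
  finally show ?thesis .
qed

theorem lemma8:
  fixes mu1 mu2 gam eps0 :: real
    and p :: "real \<Rightarrow> nat \<times> nat \<Rightarrow> real"
    and pst :: "real \<Rightarrow> (nat \<times> nat) pmf"
    and phi1 phi2 :: complex
  assumes mu1: "0 < mu1" and mu2: "0 < mu2" and gam: "0 < gam" and eps0: "0 < eps0"
    and lam2_pos: "\<forall>eps\<in>{0<..<eps0}. 0 < lam2 mu1 mu2 gam eps"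
    and policy: "\<forall>eps\<in>{0<..<eps0}. \<forall>x. 0 \<le> p eps x \<and> p eps x \<le> 1"
    and irred: "\<forall>eps\<in>{0<..<eps0}.
        irreducible_chain (Nrate (lam1 mu1 eps) (lam2 mu1 mu2 gam eps) mu1 mu2 (p eps))"
    and stat: "\<forall>eps\<in>{0<..<eps0}.
        stationary_dist (Nrate (lam1 mu1 eps) (lam2 mu1 mu2 gam eps) mu1 mu2 (p eps)) (pst eps)"
    and ssc_exp: "\<forall>theta\<ge>0. \<exists>eps_th>0. \<exists>C. \<forall>eps. 0 < eps \<and> eps \<le> eps_th \<and> eps < eps0 \<longrightarrow>
        integrable (measure_pmf (pst eps)) (\<lambda>q. exp (eps * theta * qperp_norm q)) \<and>
        measure_pmf.expectation (pst eps) (\<lambda>q. exp (eps * theta * qperp_norm q)) < C"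
    and ssc_mom: "\<forall>r::nat. \<exists>C. \<forall>eps\<in>{0<..<eps0}.
        integrable (measure_pmf (pst eps)) (\<lambda>q. qperp_norm q ^ r) \<and>
        measure_pmf.expectation (pst eps) (\<lambda>q. qperp_norm q ^ r) \<le> C"
    and phi1: "Re phi1 \<le> 0" and phi12: "Re (phi1 + phi2) \<le> 0"
  shows
    "(\<exists>C. \<forall>\<^sub>F eps in at_right 0.
        cmod (measure_pmf.expectation (pst eps)
          (\<lambda>q. exp (complex_of_real eps * (phi1 * of_nat (fst q) + phi2 * of_nat (snd q))))) \<le> C)
   \<and> (\<exists>C. \<forall>\<^sub>F eps in at_right 0.
        cmod (measure_pmf.expectation (pst eps)
          (\<lambda>q. if fst q \<le> snd q then exp (complex_of_real eps * (phi1 + phi2) * of_nat (snd q)) else 0)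
          / complex_of_real (measure_pmf.prob (pst eps) {q. fst q \<le> snd q})) \<le> C)
   \<and> (\<exists>C. \<forall>\<^sub>F eps in at_right 0.
        cmod (measure_pmf.expectation (pst eps)
          (\<lambda>q. if snd q = 0 then exp (complex_of_real eps * phi1 * of_nat (fst q)) else 0)
          / complex_of_real (measure_pmf.prob (pst eps) {q. snd q = 0})) \<le> C)
   \<and> ((\<lambda>eps. measure_pmf.expectation (pst eps)
          (\<lambda>q. exp (complex_of_real eps * (phi1 * of_nat (fst q) + phi2 * of_nat (snd q))))
        - measure_pmf.expectation (pst eps)
          (\<lambda>q. exp (complex_of_real eps * (phi1 * (if snd q \<le> fst q then of_nat (fst q) - of_nat (snd q) else 0)
                 + (phi1 + phi2) * of_nat (snd q)))))
       \<longlongrightarrow> 0) (at_right 0)"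
proof -
  \<comment> \<open>The rates, irreducibility and stationarity of the chain enter only through state space
    collapse.\<close>
  have ssc_exp_near_0: "eventually_bounded_expectation pst (\<lambda>eps q. exp (eps * theta * qperp_norm q))"
    if theta: "0 \<le> theta" for theta
  proof -
    obtain e C where "0 < e" and C: "\<forall>eps. 0 < eps \<and> eps \<le> e \<and> eps < eps0 \<longrightarrow>
        integrable (measure_pmf (pst eps)) (\<lambda>q. exp (eps * theta * qperp_norm q)) \<and>
        measure_pmf.expectation (pst eps) (\<lambda>q. exp (eps * theta * qperp_norm q)) < C"
      using ssc_exp theta by blast
    show ?thesis
      by (rule eventually_bounded_expectationI[of "min e eps0" _ _ C]) (use \<open>0 < e\<close> eps0 C in auto)
  qed
  obtain C where "\<forall>eps\<in>{0<..<eps0}. integrable (measure_pmf (pst eps)) (\<lambda>q. qperp_norm q ^ 2) \<and>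
      measure_pmf.expectation (pst eps) (\<lambda>q. qperp_norm q ^ 2) \<le> C"
    using ssc_mom by blast
  then have ssc_sq: "eventually_bounded_expectation pst (\<lambda>eps q. qperp_norm q ^ 2)"
    using eps0 by (intro eventually_bounded_expectationI[of eps0]) auto
  have mgf_dominated:
    "eventually_bounded_expectation pst (\<lambda>eps q. exp (eps * (sqrt 2 * max 0 (Re phi2)) * qperp_norm q))"
    by (rule ssc_exp_near_0) simp
  have norm_mgf_le: "norm (mgf_integrand phi1 phi2 eps q) \<le> exp (eps * (sqrt 2 * max 0 (Re phi2)) * qperp_norm q)"
    if "0 < eps" for eps q
    using phi1 phi12 that by (intro norm_mgf_integrand_le) auto
  have error_dominated: "eventually_bounded_expectation pst (\<lambda>eps q.
      norm phi1 * (qperp_norm q ^ 2 + exp (eps * (2 * sqrt 2 * norm phi1) * qperp_norm q)))"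
    by (intro eventually_bounded_expectation_mult_left eventually_bounded_expectation_add ssc_sq ssc_exp_near_0) auto
  have "\<exists>C. \<forall>\<^sub>F eps in at_right 0. norm (measure_pmf.expectation (pst eps) (mgf_integrand phi1 phi2 eps)) \<le> C"
    using mgf_dominated norm_mgf_le by (rule eventually_norm_expectation_bounded)
  moreover have "((\<lambda>eps. measure_pmf.expectation (pst eps) (mgf_integrand phi1 phi2 eps)
      - measure_pmf.expectation (pst eps) (collapsed_mgf_integrand phi1 phi2 eps)) \<longlongrightarrow> 0) (at_right 0)"
    using eventually_integrable_dominated[OF mgf_dominated norm_mgf_le] error_dominated
    by (rule tendsto_expectation_diff_zero)
      (use phi1 phi12 in \<open>auto intro: norm_mgf_integrand_sub_collapsed_le\<close>)
  moreover have Re_le_0: "Re (of_real eps * (phi1 + phi2) * of_nat (snd q)) \<le> 0"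
    "Re (of_real eps * phi1 * of_nat (fst q)) \<le> 0" if "0 < eps" for eps and q :: "nat \<times> nat"
    using phi1 phi12 that by (simp_all add: mult_nonneg_nonpos mult_nonpos_nonneg)
  ultimately show ?thesis
    unfolding mgf_integrand_def collapsed_mgf_integrand_def
    by (intro conjI eventually_norm_cond_expectation_exp_bounded Re_le_0)
qed

end
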